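(* Let $R_0^*\in SO(3)$ with unit quaternion representation $w_0^*\in\mathbb{S}^3$, let $1\le k^*<\ell$, let $(y_i,x_i)$ satisfy $y_i=R_0^*x_i$ for $i=1,\dots,k^*$, and let $c_1^2,\dots,c_\ell^2\ge 0$ with $\sum_{i=1}^{k^*}c_i^2>0$. Suppose the outliers are clustered: there is $w_0^{\mathrm{cl}}\in\mathbb{S}^3$ with $w_0^{\mathrm{cl}}\ne\pm w_0^*$ such that $Q_{k^*+1}w_0^{\mathrm{cl}}=\cdots=Q_\ell w_0^{\mathrm{cl}}=0$. Let $\omega^*=[w_0^*;\dots;w_0^*;0;\dots;0]\in\mathbb{R}^{4(\ell+1)}$ with $w_0^*$ appearing $k^*+1$ times, and $\mathcal{W}^*=\omega^*(\omega^* )^\top$. If $$1-\frac{\sum_{j=k^*+1}^{\ell}c_j^2}{2\sum_{i=1}^{k^*}c_i^2}<\big|(w_0^{\mathrm{cl}})^\top w_0^*\big|,$$ then $\mathcal{W}^*$ does not globally minimize (SDR).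
   Context: For $w=[w_1;w_2;w_3;w_4]\in\mathbb{S}^3$, $R(w)=\begin{bmatrix} w_1^2+w_2^2-w_3^2-w_4^2 & 2(w_2w_3-w_1w_4) & 2(w_2w_4+w_1w_3)\\ 2(w_2w_3+w_1w_4) & w_1^2+w_3^2-w_2^2-w_4^2 & 2(w_3w_4-w_1w_2)\\ 2(w_2w_4-w_1w_3) & 2(w_3w_4+w_1w_2) & w_1^2+w_4^2-w_2^2-w_3^2\end{bmatrix}\in SO(3)$; $\pm w$ are the unit quaternion representations of $R(w)$. $Q_i$ is the unique symmetric $4\times4$ matrix with $w^\top Q_iw=\|y_i-R(w)x_i\|_2^2$ for all $w\in\mathbb{S}^3$. For $\mathcal{A}\in\mathbb{R}^{4(\ell+1)\times4(\ell+1)}$, $[\mathcal{A}]_{ij}$ ($0\le i,j\le\ell$) is the $4\times4$ block in rows $4i+1..4i+4$, columns $4j+1..4j+4$. $\mathcal{Q}$ is symmetric with $[\mathcal{Q}]_{0i}=[\mathcal{Q}]_{i0}=\frac12(Q_i-c_i^2I_4)$ ($i\ge1$), other blocks zero. (SDR): minimize $\operatorname{tr}(\mathcal{Q}\mathcal{W})+\sum_ic_i^2$ over symmetric $\mathcal{W}\succeq0$ s.t. $[\mathcal{W}]_{0i}=[\mathcal{W}]_{ii}$ ($i=1..\ell$), $\operatorname{tr}([\mathcal{W}]_{00})=1$. *)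

theory Defs
  imports "HOL-Analysis.Analysis"
begin

definition rot_entry :: "real^4 \<Rightarrow> 3 \<Rightarrow> 3 \<Rightarrow> real" where
  "rot_entry w i j =
    (let w1 = w$1; w2 = w$2; w3 = w$3; w4 = w$4 in
     if i = 1 then
       (if j = 1 then w1^2 + w2^2 - w3^2 - w4^2
        else if j = 2 then 2*(w2*w3 - w1*w4)
        else 2*(w2*w4 + w1*w3))
     else if i = 2 then
       (if j = 1 then 2*(w2*w3 + w1*w4)
        else if j = 2 then w1^2 + w3^2 - w2^2 - w4^2
        else 2*(w3*w4 - w1*w2))
     else
       (if j = 1 then 2*(w2*w4 - w1*w3)
        else if j = 2 then 2*(w3*w4 + w1*w2)
        else w1^2 + w4^2 - w2^2 - w3^2))"

definition quat_rot :: "real^4 \<Rightarrow> real^3^3" where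
  "quat_rot w = (\<chi> i j. rot_entry w i j)"

definition Qmat :: "real^3 \<Rightarrow> real^3 \<Rightarrow> real^4^4" where
  "Qmat y x = (THE Q. transpose Q = Q \<and>
      (\<forall>w::real^4. norm w = 1 \<longrightarrow> w \<bullet> (Q *v w) = (norm (y - quat_rot w *v x))^2))"

definition idx4 :: "nat \<Rightarrow> 4" where
  "idx4 r = (if r = 0 then 1 else if r = 1 then 2 else if r = 2 then 3 else 4)"

definition ent4 :: "real^4^4 \<Rightarrow> nat \<Rightarrow> nat \<Rightarrow> real" where
  "ent4 M r s = M $ idx4 r $ idx4 s"

definition comp4 :: "real^4 \<Rightarrow> nat \<Rightarrow> real" where
  "comp4 w r = w $ idx4 r"

text \<open>Matrices of size 4(l+1) are functions nat \<Rightarrow> nat \<Rightarrow> real, only entries with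
  indices < 4(l+1) matter (0-based; block (p,q) has rows 4p..4p+3, cols 4q..4q+3).
  c i stands for c_i^2, Qf i for Q_i.\<close>

definition sdr_Q :: "nat \<Rightarrow> (nat \<Rightarrow> real) \<Rightarrow> (nat \<Rightarrow> real^4^4) \<Rightarrow> nat \<Rightarrow> nat \<Rightarrow> real" where
  "sdr_Q l c Qf a b =
    (let p = a div 4; q = b div 4; r = a mod 4; s = b mod 4 in
     if p = 0 \<and> 1 \<le> q \<and> q \<le> l then (ent4 (Qf q) r s - c q * (if r = s then 1 else 0)) / 2
     else if q = 0 \<and> 1 \<le> p \<and> p \<le> l then (ent4 (Qf p) r s - c p * (if r = s then 1 else 0)) / 2
     else 0)"

definition sdr_obj :: "nat \<Rightarrow> (nat \<Rightarrow> real) \<Rightarrow> (nat \<Rightarrow> real^4^4) \<Rightarrow> (nat \<Rightarrow> nat \<Rightarrow> real) \<Rightarrow> real" where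
  "sdr_obj l c Qf W =
    (\<Sum>a<4*(l+1). \<Sum>b<4*(l+1). sdr_Q l c Qf a b * W b a) + (\<Sum>i=1..l. c i)"

definition sdr_feasible :: "nat \<Rightarrow> (nat \<Rightarrow> nat \<Rightarrow> real) \<Rightarrow> bool" where
  "sdr_feasible l W \<longleftrightarrow>
    (\<forall>a<4*(l+1). \<forall>b<4*(l+1). W a b = W b a) \<and>
    (\<forall>v::nat \<Rightarrow> real. (\<Sum>a<4*(l+1). \<Sum>b<4*(l+1). v a * W a b * v b) \<ge> 0) \<and>
    (\<forall>i\<in>{1..l}. \<forall>r<4. \<forall>s<4. W r (4*i+s) = W (4*i+r) (4*i+s)) \<and>
    (\<Sum>r<4. W r r) = 1"

definition sdr_global_min :: "nat \<Rightarrow> (nat \<Rightarrow> real) \<Rightarrow> (nat \<Rightarrow> real^4^4) \<Rightarrow> (nat \<Rightarrow> nat \<Rightarrow> real) \<Rightarrow> bool" where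
  "sdr_global_min l c Qf W \<longleftrightarrow>
    sdr_feasible l W \<and> (\<forall>V. sdr_feasible l V \<longrightarrow> sdr_obj l c Qf W \<le> sdr_obj l c Qf V)"

definition omega_star :: "real^4 \<Rightarrow> nat \<Rightarrow> nat \<Rightarrow> real" where
  "omega_star w0 k a = (if a div 4 \<le> k then comp4 w0 (a mod 4) else 0)"

definition W_star :: "real^4 \<Rightarrow> nat \<Rightarrow> nat \<Rightarrow> nat \<Rightarrow> real" where
  "W_star w0 k a b = omega_star w0 k a * omega_star w0 k b"

end

theory Submission
  imports Defs
begin

(* W* is beaten by an explicit rank-two feasible point.  Let u = w0*, choose v = +-w0cl with
   rho = u.v = |w0cl.w0*| in [0, 1), and put g = 1 - rho, N = 1 + g^2 rho^2,
   T = 1 + g^2 (1 - rho^2), q = g (v - rho u), alpha = g^2 rho / N, beta = g / N.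
   Let V be the Gram matrix of the two block vectors
     [u; u, ..., u; alpha v, ..., alpha v]   and   [q; 0, ..., 0; beta v, ..., beta v]
   (inlier blocks 1..k, outlier blocks k+1..l), scaled by 1/sqrt T so that tr [V]_00 = 1.
   Since alpha u + beta q = (alpha^2 + beta^2) v, each block [V]_0i equals [V]_ii, so V is
   feasible.  Its objective pairs Q_i with u on the inliers, where u' Q_i u = 0, and with v
   on the outliers, where Q_j v = 0; hence it equals sum c - (C_in + g^2 C_out / N) / T,
   whereas W* gives sum c - C_in.  As N (1 - rho^2) <= 2 (1 - rho), the hypothesis
   C_out > 2 (1 - rho) C_in makes V strictly better. *)

lemma sum_lessThan_4:
  fixes f :: "nat \<Rightarrow> 'a::comm_monoid_add"
  shows "(\<Sum>r<4. f r) = f 0 + f 1 + f 2 + f 3"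
  by (simp add: eval_nat_numeral)

lemma sum_lessThan_4_mult:
  fixes f :: "nat \<Rightarrow> 'a::comm_monoid_add"
  shows "(\<Sum>a<4*m. f a) = (\<Sum>p<m. \<Sum>r<4. f (4*p + r))"
proof -
  have "(\<Sum>a<4*m. f a) = (\<Sum>p<m. sum f {p*4..<p*4+4})"
    using sum.nat_group[of f 4 m] by (simp add: mult.commute)
  also have "\<dots> = (\<Sum>p<m. \<Sum>r<4. f (4*p + r))"
    using sum.shift_bounds_nat_ivl[of f 0 "p*4" 4 for p]
    by (simp add: atLeast0LessThan algebra_simps)
  finally show ?thesis .
qed

lemma sum_atLeast1_atMost_split:
  fixes f :: "nat \<Rightarrow> 'a::comm_monoid_add"
  assumes "k \<le> l"
  shows "(\<Sum>i=1..l. f i) = (\<Sum>i=1..k. f i) + (\<Sum>i=k+1..l. f i)"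
  using sum.ub_add_nat[of 1 k f "l - k"] assms by simp

lemma abs_inner_less_1:
  fixes x y :: "'a::real_inner"
  assumes "norm x = 1" "norm y = 1" "y \<noteq> x" "y \<noteq> - x"
  shows "\<bar>x \<bullet> y\<bar> < 1"
  using Cauchy_Schwarz_ineq2[of x y] norm_cauchy_schwarz_abs_eq[of x y] assms by auto

lemma symmetric_matrix_eq_0_if_form_vanishes_on_sphere:
  fixes D :: "real^'n^'n"
  assumes sym: "transpose D = D" and zero: "\<And>w. norm w = 1 \<Longrightarrow> w \<bullet> (D *v w) = 0"
  shows "D = 0"
proof -
  have form_0: "w \<bullet> (D *v w) = 0" for w
  proof (cases "w = 0")
    case False
    have "w = norm w *\<^sub>R sgn w" using False by (simp add: sgn_div_norm)
    then have "w \<bullet> (D *v w) = (norm w)\<^sup>2 * (sgn w \<bullet> (D *v sgn w))"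
      by (metis inner_scaleR_left inner_scaleR_right matrix_vector_mult_scaleR mult.assoc
          power2_eq_square)
    then show ?thesis using False zero[of "sgn w"] by (simp add: norm_sgn)
  qed simp
  have entry: "axis a 1 \<bullet> (D *v axis b 1) = D $ a $ b" for a b
    by (simp add: matrix_vector_mult_basis inner_axis' column_def)
  have "D $ a $ b = 0" for a b
  proof -
    have "D $ a $ b = D $ b $ a" using sym by (metis transpose_def vec_lambda_beta)
    moreover have "(axis a 1 + axis b 1) \<bullet> (D *v (axis a 1 + axis b 1)) = 0" by (rule form_0)
    ultimately show ?thesis
      using form_0[of "axis a 1"] form_0[of "axis b 1"]
      by (simp add: matrix_vector_right_distrib inner_add_left inner_add_right entry)
  qed
  then show ?thesis by (simp add: vec_eq_iff)
qed

definition polarization_matrix :: "(real^'n \<Rightarrow> real) \<Rightarrow> real^'n^'n" where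
  "polarization_matrix f = (\<chi> a b. (f (axis a 1 + axis b 1) - f (axis a 1) - f (axis b 1)) / 2)"

lemma transpose_polarization_matrix: "transpose (polarization_matrix f) = polarization_matrix f"
  unfolding polarization_matrix_def transpose_def by (simp add: vec_eq_iff add.commute)

lemma norm_quat_rot_mult_sq: "(norm (quat_rot w *v x))\<^sup>2 = (w \<bullet> w)\<^sup>2 * (norm x)\<^sup>2"
  unfolding quat_rot_def rot_entry_def power2_norm_eq_inner inner_vec_def matrix_vector_mult_def
  by (simp add: sum_3 sum_4 Let_def power2_eq_square algebra_simps)

(* ||y - R(w) x||^2 = ||y||^2 - 2 y.R(w)x + ||x||^2 on the sphere, made homogeneous of degree 2
   in w by the factor w.w. *)
definition residual_form :: "real^3 \<Rightarrow> real^3 \<Rightarrow> real^4 \<Rightarrow> real" where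
  "residual_form y x w = ((norm y)\<^sup>2 + (norm x)\<^sup>2) * (w \<bullet> w) - 2 * (y \<bullet> (quat_rot w *v x))"

lemma residual_form_sphere:
  assumes "norm w = 1"
  shows "residual_form y x w = (norm (y - quat_rot w *v x))\<^sup>2"
proof -
  have "w \<bullet> w = 1" using assms by (simp flip: power2_norm_eq_inner)
  then show ?thesis
    using norm_quat_rot_mult_sq[of w x]
    by (simp add: residual_form_def power2_norm_eq_inner inner_diff_left inner_diff_right inner_commute)
qed

lemma polarization_matrix_residual_form:
  "w \<bullet> (polarization_matrix (residual_form y x) *v w) = residual_form y x w"
  unfolding polarization_matrix_def residual_form_def quat_rot_def rot_entry_def
    inner_vec_def matrix_vector_mult_def
  by (simp add: sum_3 sum_4 Let_def axis_def) (simp add: field_simps power2_eq_square)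

lemma Qmat_spec:
  "transpose (Qmat y x) = Qmat y x \<and>
   (\<forall>w::real^4. norm w = 1 \<longrightarrow> w \<bullet> (Qmat y x *v w) = (norm (y - quat_rot w *v x))\<^sup>2)"
proof -
  let ?P = "\<lambda>Q. transpose Q = Q \<and>
      (\<forall>w::real^4. norm w = 1 \<longrightarrow> w \<bullet> (Q *v w) = (norm (y - quat_rot w *v x))\<^sup>2)"
  let ?Q = "polarization_matrix (residual_form y x)"
  have "?P ?Q"
    by (simp add: transpose_polarization_matrix polarization_matrix_residual_form residual_form_sphere)
  moreover have "Q = ?Q" if "?P Q" for Q
  proof -
    have "Q - ?Q = 0"
      using that \<open>?P ?Q\<close>
      by (intro symmetric_matrix_eq_0_if_form_vanishes_on_sphere)
        (auto simp: transpose_def vec_eq_iff matrix_vector_mult_diff_rdistrib inner_diff_right)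
    then show ?thesis by simp
  qed
  ultimately have "\<exists>!Q. ?P Q" by blast
  then show ?thesis unfolding Qmat_def by (rule theI')
qed

lemma transpose_Qmat: "transpose (Qmat y x) = Qmat y x"
  using Qmat_spec by blast

lemma Qmat_quadratic_form:
  "norm w = 1 \<Longrightarrow> w \<bullet> (Qmat y x *v w) = (norm (y - quat_rot w *v x))\<^sup>2"
  using Qmat_spec by blast

definition stack :: "(nat \<Rightarrow> real^4) \<Rightarrow> nat \<Rightarrow> real" where
  "stack \<omega> a = comp4 (\<omega> (a div 4)) (a mod 4)"

definition block_gram :: "'j set \<Rightarrow> ('j \<Rightarrow> nat \<Rightarrow> real^4) \<Rightarrow> nat \<Rightarrow> nat \<Rightarrow> real" where
  "block_gram J \<omega> a b = (\<Sum>j\<in>J. stack (\<omega> j) a * stack (\<omega> j) b)"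

lemma stack_block [simp]: "r < 4 \<Longrightarrow> stack \<omega> (4*p + r) = comp4 (\<omega> p) r"
  by (simp add: stack_def)

lemma stack_block_0 [simp]: "r < 4 \<Longrightarrow> stack \<omega> r = comp4 (\<omega> 0) r"
  using stack_block[of r \<omega> 0] by simp

lemma sum_comp4_mult: "(\<Sum>r<4. comp4 x r * comp4 y r) = x \<bullet> y"
  by (simp add: sum_lessThan_4 comp4_def idx4_def inner_vec_def sum_4)

lemma sum_comp4_ent4_minus_diag:
  "(\<Sum>r<4. \<Sum>s<4. comp4 x r * (ent4 A r s - d * (if r = s then 1 else 0)) * comp4 y s)
    = x \<bullet> (A *v y) - d * (x \<bullet> y)"
  by (simp add: sum_lessThan_4 comp4_def ent4_def idx4_def inner_vec_def sum_4
      matrix_vector_mult_def algebra_simps)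

lemma sdr_Q_block:
  assumes "r < 4" "s < 4"
  shows "sdr_Q l c Qf (4*p + r) (4*q + s) =
    (if p = 0 \<and> q \<in> {1..l} then (ent4 (Qf q) r s - c q * (if r = s then 1 else 0)) / 2
     else if q = 0 \<and> p \<in> {1..l} then (ent4 (Qf p) r s - c p * (if r = s then 1 else 0)) / 2
     else 0)"
  using assms by (simp add: sdr_Q_def Let_def)

lemma sdr_Q_quadratic_stack:
  assumes sym: "\<And>i. i \<in> {1..l} \<Longrightarrow> transpose (Qf i) = Qf i"
  shows "(\<Sum>a<4*(l+1). \<Sum>b<4*(l+1). stack \<omega> a * sdr_Q l c Qf a b * stack \<omega> b)
    = (\<Sum>i=1..l. \<omega> 0 \<bullet> (Qf i *v \<omega> i) - c i * (\<omega> 0 \<bullet> \<omega> i))"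
proof -
  define B where "B i x y = x \<bullet> (Qf i *v y) - c i * (x \<bullet> y)" for i x y
  have B_sym: "B i x y = B i y x" if "i \<in> {1..l}" for i x y
    using sym[OF that] by (metis B_def dot_lmul_matrix inner_commute transpose_matrix_vector)
  have "(\<Sum>a<4*(l+1). \<Sum>b<4*(l+1). stack \<omega> a * sdr_Q l c Qf a b * stack \<omega> b)
    = (\<Sum>p<l+1. \<Sum>r<4. \<Sum>q<l+1. \<Sum>s<4.
        comp4 (\<omega> p) r * sdr_Q l c Qf (4*p + r) (4*q + s) * comp4 (\<omega> q) s)"
    unfolding sum_lessThan_4_mult by (intro sum.cong refl) simp
  also have "\<dots> = (\<Sum>p<l+1. \<Sum>q<l+1. \<Sum>r<4. \<Sum>s<4.
        comp4 (\<omega> p) r * sdr_Q l c Qf (4*p + r) (4*q + s) * comp4 (\<omega> q) s)"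
    by (rule sum.cong[OF refl], rule sum.swap)
  also have "\<dots> = (\<Sum>p<l+1. \<Sum>q<l+1. (if p = 0 \<and> q \<in> {1..l} then B q (\<omega> 0) (\<omega> q) / 2 else 0)
      + (if q = 0 \<and> p \<in> {1..l} then B p (\<omega> p) (\<omega> 0) / 2 else 0))"
    by (intro sum.cong refl) (auto simp: sdr_Q_block B_def sum_comp4_ent4_minus_diag
        simp flip: sum_divide_distrib)
  also have "\<dots> = (\<Sum>i=1..l. B i (\<omega> 0) (\<omega> i) / 2) + (\<Sum>i=1..l. B i (\<omega> i) (\<omega> 0) / 2)"
    by (simp add: sum.distrib sum.lessThan_Suc_shift sum.atLeast1_atMost_eq del: sum.lessThan_Suc)
  also have "\<dots> = (\<Sum>i=1..l. B i (\<omega> 0) (\<omega> i))"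
    by (simp add: B_sym flip: sum.distrib)
  finally show ?thesis by (simp add: B_def)
qed

lemma sdr_obj_block_gram:
  assumes "finite J" and "\<And>i. i \<in> {1..l} \<Longrightarrow> transpose (Qf i) = Qf i"
  shows "sdr_obj l c Qf (block_gram J \<omega>) =
    (\<Sum>j\<in>J. \<Sum>i=1..l. \<omega> j 0 \<bullet> (Qf i *v \<omega> j i) - c i * (\<omega> j 0 \<bullet> \<omega> j i)) + (\<Sum>i=1..l. c i)"
proof -
  have "(\<Sum>a<4*(l+1). \<Sum>b<4*(l+1). sdr_Q l c Qf a b * block_gram J \<omega> b a)
      = (\<Sum>j\<in>J. \<Sum>a<4*(l+1). \<Sum>b<4*(l+1). stack (\<omega> j) a * sdr_Q l c Qf a b * stack (\<omega> j) b)"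
    unfolding block_gram_def sum_distrib_left
    by (subst sum.swap, rule sum.cong[OF refl], subst sum.swap) (simp add: algebra_simps)
  then show ?thesis
    unfolding sdr_obj_def using sdr_Q_quadratic_stack[OF assms(2)] by simp
qed

(* For W = block_gram J omega these conditions give [W]_0i = (sum_j a j i omega j 0) z_i^T
   = (sum_j (a j i)^2) z_i z_i^T = [W]_ii, i.e. the SDR block constraints. *)
definition blocks_aligned ::
  "nat \<Rightarrow> 'j set \<Rightarrow> ('j \<Rightarrow> nat \<Rightarrow> real^4) \<Rightarrow> ('j \<Rightarrow> nat \<Rightarrow> real) \<Rightarrow> (nat \<Rightarrow> real^4) \<Rightarrow> bool"
  where "blocks_aligned l J \<omega> a z \<longleftrightarrow> (\<forall>i\<in>{1..l}.
    (\<forall>j\<in>J. \<omega> j i = a j i *\<^sub>R z i) \<and> (\<Sum>j\<in>J. a j i *\<^sub>R \<omega> j 0) = (\<Sum>j\<in>J. (a j i)\<^sup>2) *\<^sub>R z i)"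

lemma sdr_obj_aligned_block_gram:
  assumes "finite J" and "\<And>i. i \<in> {1..l} \<Longrightarrow> transpose (Qf i) = Qf i"
    and aligned: "blocks_aligned l J \<omega> a z"
  shows "sdr_obj l c Qf (block_gram J \<omega>) =
    (\<Sum>i=1..l. (\<Sum>j\<in>J. (a j i)\<^sup>2) * (z i \<bullet> (Qf i *v z i) - c i * (z i \<bullet> z i))) + (\<Sum>i=1..l. c i)"
proof -
  have "(\<Sum>j\<in>J. \<omega> j 0 \<bullet> (Qf i *v \<omega> j i) - c i * (\<omega> j 0 \<bullet> \<omega> j i))
      = (\<Sum>j\<in>J. (a j i)\<^sup>2) * (z i \<bullet> (Qf i *v z i) - c i * (z i \<bullet> z i))" if "i \<in> {1..l}" for i
  proof -
    have blocks: "\<forall>j\<in>J. \<omega> j i = a j i *\<^sub>R z i"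
      and gram: "(\<Sum>j\<in>J. a j i *\<^sub>R \<omega> j 0) = (\<Sum>j\<in>J. (a j i)\<^sup>2) *\<^sub>R z i"
      using aligned that by (auto simp: blocks_aligned_def)
    have "(\<Sum>j\<in>J. \<omega> j 0 \<bullet> (Qf i *v \<omega> j i) - c i * (\<omega> j 0 \<bullet> \<omega> j i))
        = (\<Sum>j\<in>J. a j i *\<^sub>R \<omega> j 0) \<bullet> (Qf i *v z i) - c i * ((\<Sum>j\<in>J. a j i *\<^sub>R \<omega> j 0) \<bullet> z i)"
      using blocks by (simp add: inner_sum_left sum_subtractf sum_distrib_left algebra_simps)
    then show ?thesis
      unfolding gram by (simp add: algebra_simps)
  qed
  then have "(\<Sum>j\<in>J. \<Sum>i=1..l. \<omega> j 0 \<bullet> (Qf i *v \<omega> j i) - c i * (\<omega> j 0 \<bullet> \<omega> j i))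
      = (\<Sum>i=1..l. (\<Sum>j\<in>J. (a j i)\<^sup>2) * (z i \<bullet> (Qf i *v z i) - c i * (z i \<bullet> z i)))"
    by (subst sum.swap) (rule sum.cong, simp_all)
  then show ?thesis
    using sdr_obj_block_gram[OF assms(1,2)] by simp
qed

lemma sdr_feasible_block_gram:
  assumes "finite J" and trace: "(\<Sum>j\<in>J. \<omega> j 0 \<bullet> \<omega> j 0) = 1"
    and aligned: "blocks_aligned l J \<omega> a z"
  shows "sdr_feasible l (block_gram J \<omega>)"
  unfolding sdr_feasible_def
proof (intro conjI allI impI ballI)
  fix v :: "nat \<Rightarrow> real"
  have "(\<Sum>a<4*(l+1). \<Sum>b<4*(l+1). v a * block_gram J \<omega> a b * v b)
      = (\<Sum>j\<in>J. (\<Sum>a<4*(l+1). v a * stack (\<omega> j) a)\<^sup>2)"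
    by (simp add: block_gram_def power2_eq_square sum_product sum_distrib_left algebra_simps)
      (subst sum.swap, rule sum.cong[OF refl], subst sum.swap, simp)
  then show "0 \<le> (\<Sum>a<4*(l+1). \<Sum>b<4*(l+1). v a * block_gram J \<omega> a b * v b)"
    by (simp add: sum_nonneg)
next
  fix i r s :: nat
  assume "i \<in> {1..l}" "r < 4" "s < 4"
  then have blocks: "\<forall>j\<in>J. \<omega> j i = a j i *\<^sub>R z i"
    and gram: "(\<Sum>j\<in>J. a j i *\<^sub>R \<omega> j 0) = (\<Sum>j\<in>J. (a j i)\<^sup>2) *\<^sub>R z i"
    using aligned by (auto simp: blocks_aligned_def)
  have stack_i: "comp4 (\<omega> j i) t = a j i * comp4 (z i) t" if "j \<in> J" for j t
    using blocks that by (simp add: comp4_def)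
  have "block_gram J \<omega> r (4*i + s) = (\<Sum>j\<in>J. a j i * comp4 (\<omega> j 0) r) * comp4 (z i) s"
    using \<open>r < 4\<close> \<open>s < 4\<close>
    by (simp add: block_gram_def) (simp add: stack_i sum_distrib_left mult_ac cong: sum.cong)
  also have "(\<Sum>j\<in>J. a j i * comp4 (\<omega> j 0) r) = (\<Sum>j\<in>J. (a j i)\<^sup>2) * comp4 (z i) r"
    using arg_cong[OF gram, of "\<lambda>w. comp4 w r"] by (simp add: comp4_def sum_component)
  also have "\<dots> * comp4 (z i) s = block_gram J \<omega> (4*i + r) (4*i + s)"
    using \<open>r < 4\<close> \<open>s < 4\<close>
    by (simp add: block_gram_def)
      (simp add: stack_i sum_distrib_left power2_eq_square mult_ac cong: sum.cong)
  finally show "block_gram J \<omega> r (4*i + s) = block_gram J \<omega> (4*i + r) (4*i + s)" .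
next
  have "(\<Sum>r<4. block_gram J \<omega> r r) = (\<Sum>r<4. \<Sum>j\<in>J. comp4 (\<omega> j 0) r * comp4 (\<omega> j 0) r)"
    by (rule sum.cong) (simp_all add: block_gram_def)
  also have "\<dots> = (\<Sum>j\<in>J. \<omega> j 0 \<bullet> \<omega> j 0)"
    by (subst sum.swap) (simp add: sum_comp4_mult)
  finally show "(\<Sum>r<4. block_gram J \<omega> r r) = 1"
    using trace by simp
qed (simp add: block_gram_def mult.commute)

lemma W_star_block_gram: "W_star w0 k = block_gram {()} (\<lambda>_ i. if i \<le> k then w0 else 0)"
  by (auto simp: fun_eq_iff W_star_def omega_star_def block_gram_def stack_def comp4_def)

lemma sdr_obj_W_star:
  assumes "\<And>i. i \<in> {1..l} \<Longrightarrow> transpose (Qf i) = Qf i" and "k \<le> l" and "norm w0 = 1"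
    and "\<And>i. i \<in> {1..k} \<Longrightarrow> w0 \<bullet> (Qf i *v w0) = 0"
  shows "sdr_obj l c Qf (W_star w0 k) = (\<Sum>i=1..l. c i) - (\<Sum>i=1..k. c i)"
proof -
  have aligned: "blocks_aligned l {()} (\<lambda>_ i. if i \<le> k then w0 else 0)
      (\<lambda>_ i. if i \<le> k then 1 else 0) (\<lambda>_. w0)"
    by (simp add: blocks_aligned_def)
  then have "sdr_obj l c Qf (W_star w0 k) =
      (\<Sum>i=1..l. (if i \<le> k then 1 else 0)\<^sup>2 * (w0 \<bullet> (Qf i *v w0) - c i * (w0 \<bullet> w0)))
        + (\<Sum>i=1..l. c i)"
    unfolding W_star_block_gram
    using sdr_obj_aligned_block_gram[where Qf=Qf and l=l, OF _ assms(1) aligned] by simp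
  also have "\<dots> = (\<Sum>i=1..k. - c i) + (\<Sum>i=1..l. c i)"
    using assms(3,4) unfolding sum_atLeast1_atMost_split[OF assms(2)]
    by (simp add: power2_norm_eq_inner[symmetric] cong: sum.cong_simp)
  finally show ?thesis by (simp add: sum_negf)
qed

lemma cluster_witness_gain:
  fixes \<rho> Cin Cout :: real
  defines "g \<equiv> 1 - \<rho>"
  assumes "0 \<le> \<rho>" "\<rho> < 1" "0 < Cin" "1 - Cout / (2 * Cin) < \<rho>"
  shows "Cin < (Cin + g\<^sup>2 / (1 + g\<^sup>2 * \<rho>\<^sup>2) * Cout) / (1 + g\<^sup>2 * (1 - \<rho>\<^sup>2))"
proof -
  define N where "N = 1 + g\<^sup>2 * \<rho>\<^sup>2"
  define T where "T = 1 + g\<^sup>2 * (1 - \<rho>\<^sup>2)"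
  have "0 < g" "0 < N" "0 < T"
    using assms(2,3) by (simp_all add: g_def N_def T_def add_pos_nonneg power_le_one abs_le_iff)
  have "g\<^sup>2 * (\<rho>\<^sup>2 * (1 - \<rho>\<^sup>2)) \<le> g\<^sup>2 * 1"
    using assms(2,3) by (intro mult_left_mono) (simp_all add: mult_le_one power_le_one)
  then have "N * (1 - \<rho>\<^sup>2) \<le> 2 * g"
    by (simp add: N_def g_def algebra_simps power2_eq_square)
  moreover have "2 * g * Cin < Cout"
    using assms(4,5) by (simp add: g_def field_simps)
  ultimately have "N * (1 - \<rho>\<^sup>2) * Cin < Cout"
    using assms(4) by (meson le_less_trans less_imp_le mult_right_mono)
  then have "g\<^sup>2 * (N * (1 - \<rho>\<^sup>2) * Cin) < g\<^sup>2 * Cout"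
    using \<open>0 < g\<close> by simp
  then have "Cin * N * T < Cin * N + g\<^sup>2 * Cout"
    by (simp add: T_def algebra_simps)
  then have "Cin < (Cin + g\<^sup>2 / N * Cout) / T"
    using \<open>0 < N\<close> \<open>0 < T\<close> by (simp add: field_simps)
  then show ?thesis
    by (simp add: N_def T_def)
qed

lemma cluster_witness_identities:
  fixes u v :: "'a::real_vector" and g \<rho> N :: real
  assumes "N = 1 + g\<^sup>2 * \<rho>\<^sup>2"
  shows "(g\<^sup>2 * \<rho> / N) *\<^sub>R u + (g / N) *\<^sub>R (g *\<^sub>R (v - \<rho> *\<^sub>R u)) = (g\<^sup>2 / N) *\<^sub>R v"
    and "(g\<^sup>2 * \<rho> / N)\<^sup>2 + (g / N)\<^sup>2 = g\<^sup>2 / N"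
proof -
  have "0 < N" using assms by (simp add: add_pos_nonneg)
  show "(g\<^sup>2 * \<rho> / N) *\<^sub>R u + (g / N) *\<^sub>R (g *\<^sub>R (v - \<rho> *\<^sub>R u)) = (g\<^sup>2 / N) *\<^sub>R v"
    by (simp add: algebra_simps power2_eq_square)
  have "(g\<^sup>2 * \<rho> / N)\<^sup>2 + (g / N)\<^sup>2 = g\<^sup>2 * (1 + g\<^sup>2 * \<rho>\<^sup>2) / N\<^sup>2"
    by (simp add: power_divide power_mult_distrib add_divide_distrib algebra_simps)
  then show "(g\<^sup>2 * \<rho> / N)\<^sup>2 + (g / N)\<^sup>2 = g\<^sup>2 / N"
    unfolding assms[symmetric] using \<open>0 < N\<close> by (simp add: power2_eq_square)
qed

locale cluster_witness =
  fixes u v :: "real^4" and k :: nat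
  assumes norm_u: "norm u = 1" and norm_v: "norm v = 1"
    and inner_nonneg: "0 \<le> u \<bullet> v" and inner_less_1: "u \<bullet> v < 1"
begin

definition "\<rho> = u \<bullet> v"
definition "g = 1 - \<rho>"
definition "N = 1 + g\<^sup>2 * \<rho>\<^sup>2"
definition "T = 1 + g\<^sup>2 * (1 - \<rho>\<^sup>2)"
definition "q = g *\<^sub>R (v - \<rho> *\<^sub>R u)"
definition "s = 1 / sqrt T"

definition generator :: "nat \<Rightarrow> nat \<Rightarrow> real^4" where
  "generator j i = s *\<^sub>R (if j = 0 then (if i \<le> k then u else (g\<^sup>2 * \<rho> / N) *\<^sub>R v)
    else if i = 0 then q else if i \<le> k then 0 else (g / N) *\<^sub>R v)"

definition block_coeff :: "nat \<Rightarrow> nat \<Rightarrow> real" where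
  "block_coeff j i = s * (if j = 0 then (if i \<le> k then 1 else g\<^sup>2 * \<rho> / N)
    else if i \<le> k then 0 else g / N)"

definition block_direction :: "nat \<Rightarrow> real^4" where
  "block_direction i = (if i \<le> k then u else v)"

lemma inner_u_u: "u \<bullet> u = 1" and inner_v_v: "v \<bullet> v = 1"
  using norm_u norm_v by (simp_all flip: power2_norm_eq_inner)

lemma T_pos: "0 < T"
  using inner_nonneg inner_less_1
  by (simp add: T_def \<rho>_def add_pos_nonneg power_le_one abs_le_iff)

lemma s_squared: "s\<^sup>2 = 1 / T"
  using T_pos by (simp add: s_def power_divide)

lemma sum_block_coeff_squared:
  "(\<Sum>j\<in>{0, 1}. (block_coeff j i)\<^sup>2) = (if i \<le> k then 1 else g\<^sup>2 / N) / T"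
  using s_squared
  by (simp add: block_coeff_def power_mult_distrib cluster_witness_identities(2)[OF N_def]
      flip: distrib_left add_divide_distrib)

lemma blocks_aligned_generator: "blocks_aligned l {0, 1} generator block_coeff block_direction"
  unfolding blocks_aligned_def
proof (intro ballI conjI)
  fix i j assume "i \<in> {1..l}"
  then show "generator j i = block_coeff j i *\<^sub>R block_direction i"
    by (auto simp: generator_def block_coeff_def block_direction_def)
next
  fix i assume "i \<in> {1..l}"
  show "(\<Sum>j\<in>{0, 1}. block_coeff j i *\<^sub>R generator j 0)
    = (\<Sum>j\<in>{0, 1}. (block_coeff j i)\<^sup>2) *\<^sub>R block_direction i"
  proof (cases "i \<le> k")
    case True
    then show ?thesis
      by (simp add: block_coeff_def generator_def block_direction_def power2_eq_square)
  next
    case False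
    then have "(\<Sum>j\<in>{0, 1}. block_coeff j i *\<^sub>R generator j 0)
        = s\<^sup>2 *\<^sub>R ((g\<^sup>2 * \<rho> / N) *\<^sub>R u + (g / N) *\<^sub>R q)"
      by (simp add: block_coeff_def generator_def power2_eq_square scaleR_add_right mult_ac)
    also have "\<dots> = s\<^sup>2 *\<^sub>R (g\<^sup>2 / N) *\<^sub>R v"
      unfolding q_def cluster_witness_identities(1)[OF N_def] ..
    also have "\<dots> = (\<Sum>j\<in>{0, 1}. (block_coeff j i)\<^sup>2) *\<^sub>R block_direction i"
      using False s_squared unfolding sum_block_coeff_squared by (simp add: block_direction_def)
    finally show ?thesis .
  qed
qed

lemma trace_generator: "(\<Sum>j\<in>{0, 1}. generator j 0 \<bullet> generator j 0) = 1"
proof -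
  have "q \<bullet> q = g\<^sup>2 * (1 - \<rho>\<^sup>2)"
    using inner_u_u inner_v_v
    by (simp add: q_def \<rho>_def inner_diff_left inner_diff_right inner_commute power2_eq_square
        algebra_simps)
  have "(\<Sum>j\<in>{0, 1}. generator j 0 \<bullet> generator j 0) = s\<^sup>2 * (u \<bullet> u + q \<bullet> q)"
    by (simp add: generator_def power2_eq_square algebra_simps)
  also have "\<dots> = s\<^sup>2 * T"
    using inner_u_u \<open>q \<bullet> q = g\<^sup>2 * (1 - \<rho>\<^sup>2)\<close> by (simp add: T_def)
  finally show ?thesis
    using s_squared T_pos by simp
qed

lemma sdr_obj_generator:
  assumes sym: "\<And>i. i \<in> {1..l} \<Longrightarrow> transpose (Qf i) = Qf i" and "k \<le> l"
    and inliers: "\<And>i. i \<in> {1..k} \<Longrightarrow> u \<bullet> (Qf i *v u) = 0"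
    and outliers: "\<And>j. j \<in> {k+1..l} \<Longrightarrow> Qf j *v v = 0"
  shows "sdr_obj l c Qf (block_gram {0, 1} generator)
    = (\<Sum>i=1..l. c i) - ((\<Sum>i=1..k. c i) + g\<^sup>2 / N * (\<Sum>j=k+1..l. c j)) / T"
proof -
  define F where "F i = (\<Sum>j\<in>{0, 1}. (block_coeff j i)\<^sup>2) * (block_direction i \<bullet>
    (Qf i *v block_direction i) - c i * (block_direction i \<bullet> block_direction i))" for i
  have "F i = - c i / T" if "i \<in> {1..k}" for i
    using that inliers inner_u_u unfolding F_def sum_block_coeff_squared
    by (simp add: block_direction_def)
  moreover have "F i = - (g\<^sup>2 / N * c i) / T" if "i \<in> {k+1..l}" for i
    using that outliers inner_v_v unfolding F_def sum_block_coeff_squared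
    by (simp add: block_direction_def)
  ultimately have "(\<Sum>i=1..l. F i) = - (\<Sum>i=1..k. c i) / T - g\<^sup>2 / N * (\<Sum>j=k+1..l. c j) / T"
    unfolding sum_atLeast1_atMost_split[OF \<open>k \<le> l\<close>]
    by (simp add: sum_negf sum_divide_distrib sum_distrib_left cong: sum.cong_simp)
  then show ?thesis
    using sdr_obj_aligned_block_gram[where Qf=Qf and l=l, OF _ sym blocks_aligned_generator]
    by (simp add: F_def add_divide_distrib)
qed

end

lemma exists_sdr_feasible_below_W_star:
  assumes sym: "\<And>i. i \<in> {1..l} \<Longrightarrow> transpose (Qf i) = Qf i" and "k \<le> l"
    and "norm u = 1" "norm v = 1" "0 \<le> u \<bullet> v" "u \<bullet> v < 1"
    and inliers: "\<And>i. i \<in> {1..k} \<Longrightarrow> u \<bullet> (Qf i *v u) = 0"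
    and outliers: "\<And>j. j \<in> {k+1..l} \<Longrightarrow> Qf j *v v = 0"
    and "0 < (\<Sum>i=1..k. c i)"
    and "1 - (\<Sum>j=k+1..l. c j) / (2 * (\<Sum>i=1..k. c i)) < u \<bullet> v"
  shows "\<exists>V. sdr_feasible l V \<and> sdr_obj l c Qf V < sdr_obj l c Qf (W_star u k)"
proof -
  interpret cluster_witness u v k
    using assms(3-6) by unfold_locales
  let ?V = "block_gram {0, 1} generator"
  have "sdr_feasible l ?V"
    using sdr_feasible_block_gram[OF _ trace_generator blocks_aligned_generator] by simp
  moreover have "sdr_obj l c Qf ?V < sdr_obj l c Qf (W_star u k)"
    using sdr_obj_generator[OF sym \<open>k \<le> l\<close> inliers outliers]
      sdr_obj_W_star[OF sym \<open>k \<le> l\<close> \<open>norm u = 1\<close> inliers]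
      cluster_witness_gain[OF assms(5,6,9,10)]
    by (simp add: g_def N_def T_def \<rho>_def)
  ultimately show ?thesis by blast
qed

theorem theorem3p4:
  fixes w0s wcl :: "real^4" and k l :: nat
    and x y :: "nat \<Rightarrow> real^3" and c :: "nat \<Rightarrow> real"
  assumes "norm w0s = 1"
    and "1 \<le> k" and "k < l"
    and "\<forall>i\<in>{1..k}. y i = quat_rot w0s *v x i"
    and "\<forall>i\<in>{1..l}. c i \<ge> 0"
    and "(\<Sum>i=1..k. c i) > 0"
    and "norm wcl = 1" and "wcl \<noteq> w0s" and "wcl \<noteq> - w0s"
    and "\<forall>j\<in>{k+1..l}. Qmat (y j) (x j) *v wcl = 0"
    and "1 - (\<Sum>j=k+1..l. c j) / (2 * (\<Sum>i=1..k. c i)) < \<bar>wcl \<bullet> w0s\<bar>"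
  shows "\<not> sdr_global_min l c (\<lambda>i. Qmat (y i) (x i)) (W_star w0s k)"
proof -
  let ?Q = "\<lambda>i. Qmat (y i) (x i)"
  define v where "v = (if 0 \<le> wcl \<bullet> w0s then wcl else - wcl)"
  have "norm v = 1" and inner_v: "w0s \<bullet> v = \<bar>wcl \<bullet> w0s\<bar>"
    using assms(7) by (simp_all add: v_def inner_commute)
  have "\<bar>wcl \<bullet> w0s\<bar> < 1"
    using abs_inner_less_1 assms(1,7-9) by (metis inner_commute)
  have inliers: "w0s \<bullet> (?Q i *v w0s) = 0" if "i \<in> {1..k}" for i
    using assms(1,4) that by (simp add: Qmat_quadratic_form)
  have outliers: "?Q j *v v = 0" if "j \<in> {k+1..l}" for j
    using assms(10) that by (simp add: v_def linear_neg[OF matrix_vector_mul_linear])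
  obtain V where "sdr_feasible l V" and "sdr_obj l c ?Q V < sdr_obj l c ?Q (W_star w0s k)"
    using exists_sdr_feasible_below_W_star[where Qf="?Q" and l=l and k=k and u=w0s and v=v,
        OF transpose_Qmat _ assms(1) \<open>norm v = 1\<close> _ _ inliers outliers assms(6)]
      assms(3,11) inner_v \<open>\<bar>wcl \<bullet> w0s\<bar> < 1\<close>
    by auto
  then show ?thesis
    unfolding sdr_global_min_def by (meson not_le)
qed

end
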